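(* Let $f_{SA}(x)=\sqrt{\frac{x^2+1}{2}}-\frac{x+1}{2}$ for $x\in(0,\infty)$, let $f_{SA}^*(u)=u\,f_{SA}\!\left(\frac{1-u}{u}\right)$ for $u\in(0,1)$, extended by continuity to $[0,1]$ (explicitly $f_{SA}^*(u)=\frac12\left[\sqrt{2(u^2+(1-u)^2)}-1\right]$), and define $\overline M_{SA}(C_1,C_2)=E_X\{f_{SA}^*(P(C_2\mid x))\}$. Then $$P_e\le \frac12\left[1-\frac{2}{\sqrt2-1}\,\overline M_{SA}(C_1,C_2)\right].$$
   Context: Two-class decision problem: classes (hypotheses) $C_1,C_2$, an observation $x$ in a space $\mathrm X$ with density $p(x)$, and a posteriori probabilities $P(C_1\mid x),P(C_2\mid x)\ge0$ with $P(C_1\mid x)+P(C_2\mid x)=1$. $E_X\{g(x)\}=\int_{\mathrm X} g(x)p(x)\,dx$. $P_e=E_X\{\min(P(C_1\mid x),P(C_2\mid x))\}$ is the Bayesian probability of error. Equivalently $E_X\{f^*(P(C_2\mid x))\}=E_X\{f(P(C_1\mid x)/P(C_2\mid x))\,P(C_2\mid x)\}$. *)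

theory Defs
  imports "HOL-Analysis.Analysis"
begin

definition f_SA :: "real \<Rightarrow> real" where
  "f_SA x = sqrt ((x\<^sup>2 + 1) / 2) - (x + 1) / 2"

text \<open>f_SA^*(u) = u f_SA((1-u)/u) on (0,1), extended by continuity to [0,1]
  (the limits at u = 0 and u = 1 are both (sqrt 2 - 1)/2).\<close>
definition f_SA_star :: "real \<Rightarrow> real" where
  "f_SA_star u = (if 0 < u \<and> u < 1 then u * f_SA ((1 - u) / u)
                  else (1/2) * (sqrt 2 - 1))"

definition E_X :: "'a measure \<Rightarrow> ('a \<Rightarrow> real) \<Rightarrow> ('a \<Rightarrow> real) \<Rightarrow> real" where
  "E_X M p g = (\<integral>x. g x * p x \<partial>M)"

definition bayes_error :: "'a measure \<Rightarrow> ('a \<Rightarrow> real) \<Rightarrow> ('a \<Rightarrow> real) \<Rightarrow> ('a \<Rightarrow> real) \<Rightarrow> real" where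
  "bayes_error M p P1 P2 = E_X M p (\<lambda>x. min (P1 x) (P2 x))"

definition M_SA :: "'a measure \<Rightarrow> ('a \<Rightarrow> real) \<Rightarrow> ('a \<Rightarrow> real) \<Rightarrow> real" where
  "M_SA M p P2 = E_X M p (\<lambda>x. f_SA_star (P2 x))"

end

theory Submission
  imports Defs
begin

text \<open>On [0,1], with m = min u (1 - u), the function f_SA^* depends only on m and is convex, so
  it lies below the chord joining its values (sqrt 2 - 1)/2 at m = 0 and 0 at m = 1/2. Hence
  f_SA^*(u) \<le> (sqrt 2 - 1)(1/2 - m), which rearranges to the pointwise bound
  min (P(C_1|x)) (P(C_2|x)) \<le> (1 - 2/(sqrt 2 - 1) f_SA^*(P(C_2|x)))/2; integrating against p gives
  the theorem.\<close>

lemma f_SA_star_closed_form: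
  assumes "0 \<le> u" "u \<le> 1"
  shows "f_SA_star u = sqrt ((u\<^sup>2 + (1 - u)\<^sup>2) / 2) - 1/2"
proof (cases "0 < u \<and> u < 1")
  case True
  have "u * sqrt ((((1 - u) / u)\<^sup>2 + 1) / 2) = sqrt (u\<^sup>2 * ((((1 - u) / u)\<^sup>2 + 1) / 2))"
    using True by (simp only: real_sqrt_mult real_sqrt_abs abs_of_pos)
  also have "u\<^sup>2 * ((((1 - u) / u)\<^sup>2 + 1) / 2) = (u\<^sup>2 + (1 - u)\<^sup>2) / 2"
    using True by (simp add: field_simps power2_eq_square)
  finally have "u * sqrt ((((1 - u) / u)\<^sup>2 + 1) / 2) = sqrt ((u\<^sup>2 + (1 - u)\<^sup>2) / 2)" .
  moreover have "u * (((1 - u) / u + 1) / 2) = 1/2"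
    using True by (simp add: field_simps)
  ultimately show ?thesis
    using True by (simp add: f_SA_star_def f_SA_def right_diff_distrib)
next
  case False
  then have "u = 0 \<or> u = 1" using assms by auto
  moreover have "sqrt (1/2) = sqrt 2 / 2"
    using real_div_sqrt[of 2] by (simp add: real_sqrt_divide field_simps)
  ultimately show ?thesis using False by (auto simp: f_SA_star_def field_simps)
qed

lemma f_SA_star_bounded:
  assumes "0 \<le> u" "u \<le> 1"
  shows "\<bar>f_SA_star u\<bar> \<le> 1"
proof -
  have "u\<^sup>2 + (1 - u)\<^sup>2 \<le> 2" using assms by (smt (verit) power_le_one)
  then have "sqrt ((u\<^sup>2 + (1 - u)\<^sup>2) / 2) \<le> 1" by simp
  moreover have "0 \<le> sqrt ((u\<^sup>2 + (1 - u)\<^sup>2) / 2)" by simp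
  ultimately show ?thesis using f_SA_star_closed_form[OF assms] by linarith
qed

lemma borel_measurable_f_SA_star: "f_SA_star \<in> borel_measurable borel"
  unfolding f_SA_star_def f_SA_def by measurable

lemma sqrt_mean_square_le_chord:
  fixes m :: real
  assumes "0 \<le> m" "m \<le> 1/2"
  shows "sqrt ((m\<^sup>2 + (1 - m)\<^sup>2) / 2) \<le> sqrt 2 / 2 - (sqrt 2 - 1) * m"
proof (rule real_le_lsqrt)
  have "(sqrt 2 - 1) * m \<le> (sqrt 2 - 1) * (1/2)"
    using assms by (intro mult_left_mono) auto
  then show "0 \<le> sqrt 2 / 2 - (sqrt 2 - 1) * m" by (simp add: algebra_simps)
  have "(sqrt 2 / 2 - (sqrt 2 - 1) * m)\<^sup>2 - (m\<^sup>2 + (1 - m)\<^sup>2) / 2 = (sqrt 2 - 1) * m * (1 - 2 * m)"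
    by (simp add: power2_eq_square algebra_simps field_simps)
  moreover have "0 \<le> (sqrt 2 - 1) * m * (1 - 2 * m)" using assms by simp
  ultimately show "(m\<^sup>2 + (1 - m)\<^sup>2) / 2 \<le> (sqrt 2 / 2 - (sqrt 2 - 1) * m)\<^sup>2" by linarith
qed

lemma f_SA_star_le_chord:
  assumes "0 \<le> u" "u \<le> 1"
  shows "f_SA_star u \<le> (sqrt 2 - 1) * (1/2 - min (1 - u) u)"
proof -
  define m where "m = min (1 - u) u"
  have "u\<^sup>2 + (1 - u)\<^sup>2 = m\<^sup>2 + (1 - m)\<^sup>2"
    by (cases "u \<le> 1 - u") (auto simp: m_def min_def power2_eq_square algebra_simps)
  moreover have "0 \<le> m" "m \<le> 1/2" using assms by (auto simp: m_def min_def)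
  ultimately have "sqrt ((u\<^sup>2 + (1 - u)\<^sup>2) / 2) \<le> sqrt 2 / 2 - (sqrt 2 - 1) * m"
    using sqrt_mean_square_le_chord by simp
  then show ?thesis
    using f_SA_star_closed_form[OF assms] by (simp add: m_def algebra_simps)
qed

lemma min_le_f_SA_star_bound:
  assumes "0 \<le> u" "u \<le> 1"
  shows "min (1 - u) u \<le> 1/2 + (- 1 / (sqrt 2 - 1)) * f_SA_star u"
proof -
  have "0 < sqrt 2 - 1" by simp
  then have "f_SA_star u / (sqrt 2 - 1) \<le> 1/2 - min (1 - u) u"
    using f_SA_star_le_chord[OF assms] by (simp add: divide_simps mult.commute)
  then show ?thesis by simp
qed

lemma integrable_bounded_mult:
  fixes g p :: "'a \<Rightarrow> real"
  assumes "integrable M p" "g \<in> borel_measurable M" "\<And>x. x \<in> space M \<Longrightarrow> \<bar>g x\<bar> \<le> B"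
  shows "integrable M (\<lambda>x. g x * p x)"
proof (rule Bochner_Integration.integrable_bound)
  show "integrable M (\<lambda>x. B * \<bar>p x\<bar>)" using assms(1) by auto
  show "(\<lambda>x. g x * p x) \<in> borel_measurable M"
    using assms(1,2) by measurable
  show "AE x in M. norm (g x * p x) \<le> norm (B * \<bar>p x\<bar>)"
    using assms(3) by (intro AE_I2) (force simp: abs_mult intro!: mult_right_mono)
qed

lemma E_X_le_affine:
  fixes g h p :: "'a \<Rightarrow> real"
  assumes p_nonneg: "\<And>x. x \<in> space M \<Longrightarrow> 0 \<le> p x"
    and p_int: "integrable M p" and p_total: "(\<integral>x. p x \<partial>M) = 1"
    and g_int: "integrable M (\<lambda>x. g x * p x)" and h_int: "integrable M (\<lambda>x. h x * p x)"
    and le: "\<And>x. x \<in> space M \<Longrightarrow> g x \<le> a + b * h x"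
  shows "E_X M p g \<le> a + b * E_X M p h"
proof -
  have "E_X M p g \<le> (\<integral>x. a * p x + b * (h x * p x) \<partial>M)"
    unfolding E_X_def
  proof (rule integral_mono[OF g_int])
    show "integrable M (\<lambda>x. a * p x + b * (h x * p x))" using p_int h_int by auto
    fix x assume "x \<in> space M"
    then have "g x * p x \<le> (a + b * h x) * p x"
      using le p_nonneg by (intro mult_right_mono)
    then show "g x * p x \<le> a * p x + b * (h x * p x)" by (simp add: algebra_simps)
  qed
  also have "\<dots> = a + b * E_X M p h"
    using p_int h_int p_total by (simp add: E_X_def)
  finally show ?thesis .
qed

theorem mainTheorem1:
  fixes M :: "'a measure" and p P1 P2 :: "'a \<Rightarrow> real"
  assumes p_meas: "p \<in> borel_measurable M"
    and p_nonneg: "\<And>x. x \<in> space M \<Longrightarrow> p x \<ge> 0"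
    and p_int: "integrable M p"
    and p_total: "(\<integral>x. p x \<partial>M) = 1"
    and P1_meas: "P1 \<in> borel_measurable M"
    and P2_meas: "P2 \<in> borel_measurable M"
    and P1_nonneg: "\<And>x. x \<in> space M \<Longrightarrow> P1 x \<ge> 0"
    and P2_nonneg: "\<And>x. x \<in> space M \<Longrightarrow> P2 x \<ge> 0"
    and P_sum: "\<And>x. x \<in> space M \<Longrightarrow> P1 x + P2 x = 1"
  shows "bayes_error M p P1 P2 \<le> (1/2) * (1 - (2 / (sqrt 2 - 1)) * M_SA M p P2)"
proof -
  have P2_le_1: "\<And>x. x \<in> space M \<Longrightarrow> P2 x \<le> 1"
    using P_sum P1_nonneg by (smt (verit))
  have min_int: "integrable M (\<lambda>x. min (P1 x) (P2 x) * p x)"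
  proof (rule integrable_bounded_mult[OF p_int])
    show "(\<lambda>x. min (P1 x) (P2 x)) \<in> borel_measurable M" using P1_meas P2_meas by measurable
    show "\<bar>min (P1 x) (P2 x)\<bar> \<le> 1" if "x \<in> space M" for x
      using P1_nonneg[OF that] P2_nonneg[OF that] P2_le_1[OF that] by auto
  qed
  have f_SA_star_int: "integrable M (\<lambda>x. f_SA_star (P2 x) * p x)"
    using f_SA_star_bounded P2_nonneg P2_le_1
    by (intro integrable_bounded_mult[OF p_int, where B = 1])
       (auto intro: measurable_compose[OF P2_meas borel_measurable_f_SA_star])
  have min_le: "min (P1 x) (P2 x) \<le> 1/2 + (- 1 / (sqrt 2 - 1)) * f_SA_star (P2 x)"
    if "x \<in> space M" for x
    using min_le_f_SA_star_bound[OF P2_nonneg[OF that] P2_le_1[OF that]] P_sum[OF that]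
    by (simp add: eq_diff_eq[symmetric])
  have "bayes_error M p P1 P2 \<le> 1/2 + (- 1 / (sqrt 2 - 1)) * M_SA M p P2"
    unfolding bayes_error_def M_SA_def
    using E_X_le_affine[OF p_nonneg p_int p_total min_int f_SA_star_int min_le] .
  then show ?thesis by (simp add: field_simps)
qed

end
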